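(* Let $N$ be a self-correcting point process, i.e. a simple point process with $N(-\infty,0]=0$ and intensity $\lambda_t=\lambda(Z_t)$, $Z_t:=t-N_{t-}$, where $\lambda:\mathbb R\to\mathbb R^+$ is continuous and increasing with $0<\lambda^-:=\lim_{z\to-\infty}\lambda(z)<1<\lim_{z\to+\infty}\lambda(z)=:\lambda^+<\infty$. Then $\lim_{t\to\infty}\mathbb{E}[N_t]/t=1$.
   Context: The intensity $\lambda_t$ is the $\mathcal F_t$-predictable intensity of $N$, i.e. $N_t-\int_0^t\lambda_sds$ is a martingale. *)

theory Defs
  imports "HOL-Probability.Probability"
begin

definition left_lim :: "(real \<Rightarrow> real) \<Rightarrow> real \<Rightarrow> real" where
  "left_lim f t = Lim (at_left t) f"

definition simple_counting_path :: "(real \<Rightarrow> real) \<Rightarrow> bool" where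
  "simple_counting_path f \<longleftrightarrow>
     (\<forall>t. f t \<in> \<nat>) \<and> mono f \<and> (\<forall>t. continuous (at_right t) f) \<and>
     (\<forall>t\<le>0. f t = 0) \<and> (\<forall>t. f t - left_lim f t \<le> 1)"

definition filtration_of :: "'a measure \<Rightarrow> (real \<Rightarrow> 'a measure) \<Rightarrow> bool" where
  "filtration_of M F \<longleftrightarrow>
     (\<forall>t. subalgebra M (F t)) \<and> (\<forall>s t. s \<le> t \<longrightarrow> sets (F s) \<subseteq> sets (F t))"

definition martingale_on :: "'a measure \<Rightarrow> (real \<Rightarrow> 'a measure) \<Rightarrow> (real \<Rightarrow> 'a \<Rightarrow> real) \<Rightarrow> bool" where
  "martingale_on M F X \<longleftrightarrow>
     (\<forall>t\<ge>0. integrable M (X t) \<and> X t \<in> borel_measurable (F t)) \<and>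
     (\<forall>s t A. 0 \<le> s \<longrightarrow> s \<le> t \<longrightarrow> A \<in> sets (F s) \<longrightarrow>
        (\<integral>x\<in>A. X t x \<partial>M) = (\<integral>x\<in>A. X s x \<partial>M))"

end

theory Submission
  imports Defs
begin

text \<open>
  The deviation \<open>Z\<^sub>t = t - N\<^sub>t\<close> is restoring: the intensity \<open>\<lambda>(Z)\<close> exceeds \<open>1\<close> when \<open>Z\<close> is
  large and is below \<open>1\<close> when \<open>Z\<close> is very negative. Testing the martingale property against
  \<open>F\<^sub>s\<close>-measurable weights turns this into the drift inequality \<open>E[Z\<^sub>s\<^sub>+\<^sub>1\<^sup>2] \<le> E[Z\<^sub>s\<^sup>2] + C\<close>.
  The only term not controlled by the compensator is the second factorial moment \<open>E[k(k-1)]\<close> of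
  the number \<open>k\<close> of jumps in \<open>[s, s + 1]\<close>; since jumps have size one, \<open>k(k-1)\<close> is eventually
  equal to sums over finer and finer partitions whose expectations are at most \<open>2 \<lambda>\<^sup>+\<^sup>2\<close>, so
  Fatou's lemma bounds it. Hence \<open>E[Z\<^sub>n\<^sup>2] \<le> C n\<close>, so \<open>\<bar>E N\<^sub>n - n\<bar> \<le> \<surd>(C n)\<close>, and monotonicity of
  \<open>t \<mapsto> E N\<^sub>t\<close> interpolates between integer times.
\<close>

section \<open>Left limits of monotone functions\<close>

lemma left_lim_mono_eq_Sup:
  fixes f :: "real \<Rightarrow> real"
  assumes "mono f"
  shows "left_lim f u = Sup (f ` {..<u})"
proof -
  have "(f \<longlongrightarrow> Sup (f ` ({..<u} \<inter> UNIV))) (at u within ({..<u} \<inter> UNIV))"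
    by (rule Lim_left_bound[where K="f u"]) (use assms in \<open>auto simp: mono_def\<close>)
  then have "(f \<longlongrightarrow> Sup (f ` {..<u})) (at_left u)" by simp
  then show ?thesis unfolding left_lim_def by (intro tendsto_Lim) auto
qed

lemma le_left_lim:
  fixes f :: "real \<Rightarrow> real"
  assumes "mono f" "a < u"
  shows "f a \<le> left_lim f u"
  unfolding left_lim_mono_eq_Sup[OF assms(1)]
  by (rule cSup_upper) (use assms in \<open>auto simp: mono_def intro!: bdd_aboveI2[where M="f u"]\<close>)

lemma left_lim_le:
  fixes f :: "real \<Rightarrow> real"
  assumes "mono f"
  shows "left_lim f u \<le> f u"
  unfolding left_lim_mono_eq_Sup[OF assms] by (rule cSup_least) (use assms in \<open>auto simp: mono_def\<close>)

lemma mono_left_lim: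
  fixes f :: "real \<Rightarrow> real"
  assumes "mono f"
  shows "mono (left_lim f)"
proof (rule monoI)
  fix x y :: real
  assume "x \<le> y"
  show "left_lim f x \<le> left_lim f y"
  proof (cases "x < y")
    case True
    then show ?thesis using left_lim_le[OF assms, of x] le_left_lim[OF assms True] by linarith
  qed (use \<open>x \<le> y\<close> in simp)
qed

section \<open>Integrals of a monotone intensity along a monotone path\<close>

context
  fixes lam :: "real \<Rightarrow> real" and B :: real
  assumes lam_mono: "mono lam" and lam_nonneg: "\<And>x. 0 \<le> lam x" and lam_le: "\<And>x. lam x \<le> B"
begin

lemma integrable_on_lam_left_lim:
  fixes f :: "real \<Rightarrow> real"
  assumes "mono f"
  shows "(\<lambda>u. lam (u - left_lim f u)) integrable_on {a..b}"
proof (rule measurable_bounded_by_integrable_imp_integrable_real[where g="\<lambda>_. B"])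
  have [measurable]: "left_lim f \<in> borel_measurable borel" "lam \<in> borel_measurable borel"
    using borel_measurable_mono mono_left_lim[OF assms] lam_mono by blast+
  have "(\<lambda>u. lam (u - left_lim f u)) \<in> borel_measurable lebesgue"
    by (rule measurable_completion) measurable
  then show "(\<lambda>u. lam (u - left_lim f u)) \<in> borel_measurable (lebesgue_on {a..b})"
    by (rule measurable_restrict_space1)
qed (use lam_nonneg lam_le in \<open>auto simp: abs_of_nonneg\<close>)

lemma integral_lam_left_lim_bounds:
  fixes f :: "real \<Rightarrow> real"
  assumes f: "mono f" and "a \<le> b"
  shows "(b - a) * lam (a - f b) \<le> integral {a..b} (\<lambda>u. lam (u - left_lim f u))"
    and "integral {a..b} (\<lambda>u. lam (u - left_lim f u)) \<le> (b - a) * lam (b - f a)"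
proof -
  let ?g = "\<lambda>u. lam (u - left_lim f u)"
  \<comment> \<open>At \<open>u = a\<close> only \<open>left_lim f a \<le> f a\<close> is known, too weak for the upper bound, so the
      integrand is changed at that single point.\<close>
  define g where "g u = (if u = a then lam (a - f a) else ?g u)" for u
  have int_g: "integral {a..b} ?g = integral {a..b} g"
    by (rule integral_spike[where S="{a}"]) (auto simp: g_def)
  have g_integrable: "g integrable_on {a..b}"
    by (rule integrable_spike[OF integrable_on_lam_left_lim[OF f], where S="{a}"]) (auto simp: g_def)
  have int_const: "integral {a..b} (\<lambda>_. C) = (b - a) * C" for C
    using content_real[OF \<open>a \<le> b\<close>] by simp
  have "lam (a - f b) \<le> g u" if "u \<in> {a..b}" for u
  proof -
    have "f u \<le> f b" "f a \<le> f b" using that \<open>a \<le> b\<close> by (auto intro: monoD[OF f])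
    then show ?thesis
      using that left_lim_le[OF f, of u] by (auto simp: g_def intro!: monoD[OF lam_mono])
  qed
  then have "integral {a..b} (\<lambda>_. lam (a - f b)) \<le> integral {a..b} g"
    by (rule integral_le[OF integrable_const_ivl g_integrable])
  then show "(b - a) * lam (a - f b) \<le> integral {a..b} ?g" by (simp only: int_g int_const)
  have "g u \<le> lam (b - f a)" if "u \<in> {a..b}" for u
    using that \<open>a \<le> b\<close> le_left_lim[OF f, of a u] by (auto simp: g_def intro!: monoD[OF lam_mono])
  then have "integral {a..b} g \<le> integral {a..b} (\<lambda>_. lam (b - f a))"
    by (rule integral_le[OF g_integrable integrable_const_ivl])
  then show "integral {a..b} ?g \<le> (b - a) * lam (b - f a)" by (simp only: int_g int_const)
qed

end

section \<open>Simple counting paths on fine partitions\<close>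

lemma Nats_diff_less_2_imp_le_1:
  fixes p q :: real
  assumes "p \<in> \<nat>" "q \<in> \<nat>" "p - q < 2"
  shows "p - q \<le> 1"
proof -
  obtain n k where nk: "p = real n" "q = real k" using assms(1,2) Nats_cases by metis
  then have "int n - int k < 2" using assms(3) by linarith
  then show ?thesis unfolding nk by linarith
qed

lemma simple_counting_path_local_increment_le_1:
  fixes f :: "real \<Rightarrow> real"
  assumes "simple_counting_path f"
  shows "\<exists>r>0. \<forall>y z. dist y x < r \<longrightarrow> dist z x < r \<longrightarrow> y \<le> z \<longrightarrow> f z - f y \<le> 1"
proof -
  have mono: "mono f" and nat: "\<And>t. f t \<in> \<nat>" and right_cont: "continuous (at_right x) f"
    and jump: "f x - left_lim f x \<le> 1"
    using assms unfolding simple_counting_path_def by auto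
  have "left_lim f x - 1/2 < Sup (f ` {..<x})" using left_lim_mono_eq_Sup[OF mono] by simp
  from less_cSupD[OF _ this] obtain y0 where y0: "y0 < x" "left_lim f x - 1/2 < f y0" by auto
  have "(f \<longlongrightarrow> f x) (at_right x)" using right_cont by (simp add: continuous_within)
  then have "eventually (\<lambda>y. f y < f x + 1/2) (at_right x)" by (rule order_tendstoD) simp
  then obtain b where b: "b > x" "\<And>y. y > x \<Longrightarrow> y < b \<Longrightarrow> f y < f x + 1/2"
    unfolding eventually_at_right[OF less_add_one[of x]] by auto
  define r where "r = min (x - y0) (b - x)"
  have "f z - f y \<le> 1" if "dist y x < r" "dist z x < r" "y \<le> z" for y z
  proof -
    have "left_lim f x - 1/2 < f y"
    proof (cases "y < x")
      case True
      then have "f y0 \<le> f y" using that(1) by (intro monoD[OF mono]) (auto simp: r_def dist_real_def)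
      then show ?thesis using y0 by simp
    next
      case False
      then show ?thesis using monoD[OF mono, of x y] left_lim_le[OF mono, of x] by simp
    qed
    moreover have "f z < f x + 1/2"
    proof (cases "z \<le> x")
      case True
      then show ?thesis using monoD[OF mono True] by simp
    next
      case False
      then show ?thesis using that(2) b(2) by (auto simp: r_def dist_real_def)
    qed
    ultimately show ?thesis using jump by (intro Nats_diff_less_2_imp_le_1 nat) simp
  qed
  moreover have "r > 0" using y0 b unfolding r_def by simp
  ultimately show ?thesis by blast
qed

lemma simple_counting_path_uniform_partition_increment_le_1:
  fixes f :: "real \<Rightarrow> real"
  assumes "simple_counting_path f"
  shows "eventually (\<lambda>m. \<forall>c<m. f (a + real (Suc c) / real m) - f (a + real c / real m) \<le> 1)
           sequentially"
proof -
  define P where "P U \<longleftrightarrow> (\<forall>y\<in>U. \<forall>z\<in>U. y \<le> z \<longrightarrow> f z - f y \<le> 1)" for U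
  define G where "G = {ball x r | x r. r > 0 \<and> P (ball x r)}"
  have "{a..a+1} \<subseteq> \<Union>G"
  proof
    fix x
    obtain r where "r > 0" "\<forall>y z. dist y x < r \<longrightarrow> dist z x < r \<longrightarrow> y \<le> z \<longrightarrow> f z - f y \<le> 1"
      using simple_counting_path_local_increment_le_1[OF assms, of x] by blast
    then have "P (ball x r)" by (auto simp: P_def dist_commute)
    then have "ball x r \<in> G" using \<open>r > 0\<close> unfolding G_def by blast
    moreover have "x \<in> ball x r" using \<open>r > 0\<close> by simp
    ultimately show "x \<in> \<Union>G" by blast
  qed
  moreover have "\<And>g. g \<in> G \<Longrightarrow> open g" unfolding G_def by auto
  ultimately obtain e where e: "0 < e" "\<And>x. x \<in> {a..a+1} \<Longrightarrow> \<exists>g\<in>G. ball x e \<subseteq> g"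
    using Heine_Borel_lemma[OF compact_Icc] by metis
  obtain m0 :: nat where m0: "1 / e < real m0" using reals_Archimedean2 by blast
  have "f (a + real (Suc c) / real m) - f (a + real c / real m) \<le> 1" if "m0 \<le> m" "c < m" for m c
  proof -
    have "1 / e < real m" using m0 that(1) by (meson of_nat_le_iff less_le_trans)
    then have "1 / real m < e" using e(1) that(2) by (simp add: field_simps)
    define y where "y = a + real c / real m"
    have "y \<in> {a..a+1}" using that by (simp add: y_def)
    then obtain g where "g \<in> G" "ball y e \<subseteq> g" using e(2) by blast
    then have "P g" "y \<in> g" "y + 1 / real m \<in> g"
      using e(1) \<open>1 / real m < e\<close> by (auto simp: G_def dist_real_def)
    then have "f (y + 1 / real m) - f y \<le> 1" unfolding P_def by simp
    moreover have "a + real (Suc c) / real m = y + 1 / real m" by (simp add: y_def add_divide_distrib)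
    ultimately show ?thesis by (simp only: y_def[symmetric])
  qed
  then show ?thesis unfolding eventually_sequentially by blast
qed

lemma telescope_second_factorial:
  fixes h :: "nat \<Rightarrow> real"
  shows "(h m - h 0) * (h m - h 0 - 1) = (\<Sum>c<m. (h (Suc c) - h c) * (h (Suc c) - h c - 1))
           + 2 * (\<Sum>c<m. (h c - h 0) * (h (Suc c) - h c))"
  by (induction m) (simp_all add: algebra_simps)

lemma Ints_01_mult_diff_1:
  fixes d :: real
  assumes "d \<in> \<int>" "0 \<le> d" "d \<le> 1"
  shows "d * (d - 1) = 0"
proof -
  obtain n where "d = of_int n" using assms(1) Ints_cases by blast
  with assms have "d = 0 \<or> d = 1" by auto
  then show ?thesis by auto
qed

text \<open>\<open>k (k - 1)\<close> for the increment \<open>k\<close> over \<open>[a, a + 1]\<close> counts ordered pairs of distinct jumps;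
  once the partition puts every jump into its own cell, the sum counts each unordered pair twice.\<close>

lemma simple_counting_path_second_factorial_eq_sum:
  fixes f :: "real \<Rightarrow> real"
  assumes "simple_counting_path f"
  shows "eventually (\<lambda>m. (f (a + 1) - f a) * (f (a + 1) - f a - 1) =
           2 * (\<Sum>c<m. (f (a + real c / real m) - f a) *
                         (f (a + real (Suc c) / real m) - f (a + real c / real m)))) sequentially"
  using simple_counting_path_uniform_partition_increment_le_1[OF assms, of a]
    eventually_gt_at_top[of 0]
proof eventually_elim
  case (elim m)
  define h where "h c = f (a + real c / real m)" for c
  have mono: "mono f" and nat: "\<And>t. f t \<in> \<nat>" using assms by (auto simp: simple_counting_path_def)
  have "(\<Sum>c<m. (h (Suc c) - h c) * (h (Suc c) - h c - 1)) = 0"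
  proof (intro sum.neutral ballI)
    fix c assume "c \<in> {..<m}"
    then have "h (Suc c) - h c \<le> 1" using elim(1) by (simp add: h_def)
    moreover have "h c \<le> h (Suc c)" unfolding h_def by (intro monoD[OF mono]) (simp add: divide_right_mono)
    moreover have "h (Suc c) - h c \<in> \<int>" unfolding h_def using nat
      by (intro Ints_diff) (auto intro: Nats_subset_Ints[THEN subsetD])
    ultimately show "(h (Suc c) - h c) * (h (Suc c) - h c - 1) = 0"
      by (intro Ints_01_mult_diff_1) auto
  qed
  then show ?case using telescope_second_factorial[of h m] elim(2) by (simp add: h_def)
qed

text \<open>The drift term \<open>z (1 - j)\<close> of the squared deviation \<open>z\<^sup>2\<close> over one unit of time, where \<open>j\<close> is
  the compensator and \<open>k\<close> the number of jumps: as \<open>\<lambda>(z - k) \<le> j \<le> \<lambda>(z + 1)\<close>, it is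
  nonpositive unless \<open>z\<close> lies between the thresholds \<open>z\<^sub>0\<close> and \<open>z\<^sub>1\<close> (up to \<open>k\<close>).\<close>

lemma drift_le:
  fixes lam :: "real \<Rightarrow> real"
  assumes "0 \<le> k" and "lam (z - k) \<le> j" "j \<le> lam (z + 1)" and "0 \<le> j" "j \<le> lp"
    and "\<forall>w\<ge>z1. 1 \<le> lam w" and "z0 \<le> 0" "\<forall>w\<le>z0. lam w \<le> 1"
  shows "z * (1 - j) \<le> \<bar>z1\<bar> + (1 - z0) * lp + k"
proof -
  have "0 \<le> (1 - z0) * lp" using assms by simp
  consider "0 \<le> z" "z1 \<le> z - k" | "0 \<le> z" "z - k < z1" | "z < 0" "z + 1 \<le> z0" | "z < 0" "z0 < z + 1"
    by linarith
  then show ?thesis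
  proof cases
    case 1
    then have "1 \<le> j" using assms by force
    then have "z * (1 - j) \<le> 0" using 1 by (simp add: mult_nonneg_nonpos)
    then show ?thesis using assms(1) \<open>0 \<le> (1 - z0) * lp\<close> abs_ge_zero[of z1] by linarith
  next
    case 2
    then have "z * (1 - j) \<le> z" using assms mult_left_mono[of "1 - j" 1 z] by simp
    then show ?thesis using 2 \<open>0 \<le> (1 - z0) * lp\<close> abs_ge_self[of z1] by linarith
  next
    case 3
    then have "j \<le> 1" using assms by force
    then have "z * (1 - j) \<le> 0" using 3 by (simp add: mult_nonpos_nonneg)
    then show ?thesis using assms(1) \<open>0 \<le> (1 - z0) * lp\<close> abs_ge_zero[of z1] by linarith
  next
    case 4
    have "z * (1 - j) = (- z) * (j - 1)" by (simp add: algebra_simps)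
    also have "\<dots> \<le> (- z) * lp" using 4 assms by (intro mult_left_mono) auto
    also have "\<dots> \<le> (1 - z0) * lp" using 4 assms by (intro mult_right_mono) auto
    finally show ?thesis using assms by linarith
  qed
qed

lemma Fatou_integrable_le:
  fixes U :: "nat \<Rightarrow> 'a \<Rightarrow> real"
  assumes [measurable]: "\<And>m. U m \<in> borel_measurable M" "k \<in> borel_measurable M"
    and nonneg: "\<And>m x. x \<in> space M \<Longrightarrow> 0 \<le> U m x"
    and lim: "\<And>x. x \<in> space M \<Longrightarrow> (\<lambda>m. U m x) \<longlonglongrightarrow> k x"
    and bound: "eventually (\<lambda>m. integrable M (U m) \<and> integral\<^sup>L M (U m) \<le> B) sequentially"
  shows "integrable M k" "integral\<^sup>L M k \<le> B"
proof -
  have k_nonneg: "0 \<le> k x" if "x \<in> space M" for x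
    using LIMSEQ_le_const[OF lim[OF that]] nonneg[OF that] by blast
  have "0 \<le> B"
  proof -
    obtain m where "integral\<^sup>L M (U m) \<le> B" using bound unfolding eventually_sequentially by blast
    moreover have "0 \<le> integral\<^sup>L M (U m)" using nonneg by (intro integral_nonneg_AE AE_I2)
    ultimately show ?thesis by linarith
  qed
  have "(\<integral>\<^sup>+x. ennreal (k x) \<partial>M) = (\<integral>\<^sup>+x. liminf (\<lambda>m. ennreal (U m x)) \<partial>M)"
    using lim by (intro nn_integral_cong lim_imp_Liminf[symmetric]) auto
  also have "\<dots> \<le> liminf (\<lambda>m. \<integral>\<^sup>+x. ennreal (U m x) \<partial>M)"
    by (rule nn_integral_liminf) simp
  also have "\<dots> \<le> limsup (\<lambda>m. \<integral>\<^sup>+x. ennreal (U m x) \<partial>M)"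
    by (rule Liminf_le_Limsup) simp
  also have "\<dots> \<le> ennreal B"
    using bound by (intro Limsup_bounded)
      (auto elim!: eventually_mono simp: nn_integral_eq_integral nonneg ennreal_leI)
  finally have k_le: "(\<integral>\<^sup>+x. ennreal (k x) \<partial>M) \<le> ennreal B" .
  then show int_k: "integrable M k"
    using k_nonneg le_less_trans[OF k_le ennreal_less_top] by (intro integrableI_nonneg) auto
  show "integral\<^sup>L M k \<le> B"
    using k_le \<open>0 \<le> B\<close> k_nonneg by (simp add: nn_integral_eq_integral[OF int_k])
qed

lemma ratio_tendsto_1_of_sqrt_deviation:
  fixes g :: "real \<Rightarrow> real"
  assumes mono: "\<And>s t. 0 \<le> s \<Longrightarrow> s \<le> t \<Longrightarrow> g s \<le> g t"
    and dev: "\<And>n::nat. \<bar>real n - g (real n)\<bar> \<le> sqrt (C * real n)" and "0 \<le> C"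
  shows "((\<lambda>t. g t / t) \<longlongrightarrow> 1) at_top"
proof -
  define K where "K = sqrt (2 * C)"
  have "\<bar>g t / t - 1\<bar> \<le> 1 / t + K * (1 / sqrt t)" if "1 \<le> t" for t
  proof -
    define n where "n = nat \<lfloor>t\<rfloor>"
    have n: "real n \<le> t" "t \<le> real (Suc n)" "real (Suc n) \<le> 2 * t"
      using that by (auto simp: n_def) linarith+
    have "g (real n) \<le> g t" "g t \<le> g (real (Suc n))" using n mono by auto
    moreover have "C * real n \<le> C * t" "C * real (Suc n) \<le> C * (2 * t)"
      using n \<open>0 \<le> C\<close> by (intro mult_left_mono; simp)+
    then have "sqrt (C * real n) \<le> sqrt (2 * (C * t))" "sqrt (C * real (Suc n)) \<le> sqrt (2 * (C * t))"
      using mult_nonneg_nonneg[OF \<open>0 \<le> C\<close>, of t] \<open>1 \<le> t\<close>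
      by (simp_all add: real_sqrt_le_mono)
    moreover have "sqrt (2 * (C * t)) = K * sqrt t" unfolding K_def by (simp add: real_sqrt_mult[symmetric])
    ultimately have "\<bar>g t - t\<bar> \<le> 1 + K * sqrt t"
      using dev[of n] dev[of "Suc n"] n by (auto simp: abs_le_iff)
    then have "\<bar>g t - t\<bar> / t \<le> (1 + K * sqrt t) / t" using that by (intro divide_right_mono) auto
    moreover have "\<bar>g t / t - 1\<bar> = \<bar>g t - t\<bar> / t" using that by (simp add: field_simps abs_divide)
    moreover have "(1 + K * sqrt t) / t = 1 / t + K * (sqrt t / t)" by (simp add: add_divide_distrib)
    moreover have "sqrt t / t = 1 / sqrt t" using that by (simp add: sqrt_divide_self_eq inverse_eq_divide)
    ultimately show ?thesis by simp
  qed
  then have "\<forall>\<^sub>F t in at_top. norm (g t / t - 1) \<le> 1 / t + K * (1 / sqrt t)"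
    by (auto simp: eventually_at_top_linorder intro!: exI[of _ 1])
  moreover have "((\<lambda>t::real. 1 / t + K * (1 / sqrt t)) \<longlongrightarrow> 0) at_top"
    by (intro tendsto_add_zero tendsto_mult_right_zero tendsto_divide_0[OF tendsto_const]
        filterlim_at_top_imp_at_infinity[OF filterlim_ident] filterlim_at_top_imp_at_infinity[OF sqrt_at_top])
  ultimately have "((\<lambda>t. g t / t - 1) \<longlongrightarrow> 0) at_top" by (rule Lim_null_comparison)
  then show ?thesis by (simp add: LIM_zero_iff)
qed

section \<open>Self-correcting point processes\<close>

locale self_correcting_process = prob_space M
  for M :: "'a measure" +
  fixes F :: "real \<Rightarrow> 'a measure" and N :: "real \<Rightarrow> 'a \<Rightarrow> real"
    and lam :: "real \<Rightarrow> real" and lam_minus lam_plus :: real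
  assumes filtration: "filtration_of M F"
    and paths: "\<And>\<omega>. \<omega> \<in> space M \<Longrightarrow> simple_counting_path (\<lambda>t. N t \<omega>)"
    and adapted: "\<And>t. N t \<in> borel_measurable (F t)"
    and lam_mono: "mono lam"
    and lam_at_bot: "(lam \<longlongrightarrow> lam_minus) at_bot"
    and lam_at_top: "(lam \<longlongrightarrow> lam_plus) at_top"
    and lam_minus_pos: "0 < lam_minus" and lam_minus_less_1: "lam_minus < 1"
    and lam_plus_greater_1: "1 < lam_plus"
    and martingale: "martingale_on M F
          (\<lambda>t \<omega>. N t \<omega> - integral {0..t} (\<lambda>s. lam (s - left_lim (\<lambda>u. N u \<omega>) s)))"
begin

definition compensator :: "real \<Rightarrow> 'a \<Rightarrow> real" where
  "compensator t \<omega> = integral {0..t} (\<lambda>s. lam (s - left_lim (\<lambda>u. N u \<omega>) s))"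

definition compensator_incr :: "real \<Rightarrow> real \<Rightarrow> 'a \<Rightarrow> real" where
  "compensator_incr s t \<omega> = compensator t \<omega> - compensator s \<omega>"

lemma lam_ge_lam_minus: "lam_minus \<le> lam x"
proof (rule tendsto_le[OF trivial_limit_at_bot_linorder tendsto_const lam_at_bot])
  show "\<forall>\<^sub>F y in at_bot. lam y \<le> lam x"
    unfolding eventually_at_bot_linorder by (intro exI[of _ x] allI impI monoD[OF lam_mono])
qed

lemma lam_le_lam_plus: "lam x \<le> lam_plus"
proof (rule tendsto_le[OF trivial_limit_at_top_linorder lam_at_top tendsto_const])
  show "\<forall>\<^sub>F y in at_top. lam x \<le> lam y"
    unfolding eventually_at_top_linorder by (intro exI[of _ x] allI impI monoD[OF lam_mono])
qed

lemma lam_nonneg: "0 \<le> lam x"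
  using lam_ge_lam_minus[of x] lam_minus_pos by simp

lemma N_mono: "\<omega> \<in> space M \<Longrightarrow> s \<le> t \<Longrightarrow> N s \<omega> \<le> N t \<omega>"
  using paths unfolding simple_counting_path_def mono_def by blast

lemma N_eq_0: "\<omega> \<in> space M \<Longrightarrow> t \<le> 0 \<Longrightarrow> N t \<omega> = 0"
  using paths unfolding simple_counting_path_def by blast

lemma subalgebra_F: "subalgebra M (F t)"
  using filtration unfolding filtration_of_def by blast

lemma borel_measurable_F_imp_M: "f \<in> borel_measurable (F t) \<Longrightarrow> f \<in> borel_measurable M"
  by (rule measurable_from_subalg[OF subalgebra_F])

lemma borel_measurable_F_mono:
  assumes "s \<le> t" "f \<in> borel_measurable (F s)"
  shows "f \<in> borel_measurable (F t)"
proof -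
  have "subalgebra (F t) (F s)"
    using filtration assms(1) subalgebra_F unfolding filtration_of_def subalgebra_def by auto
  then show ?thesis using measurable_from_subalg assms(2) by blast
qed

lemma N_measurable [measurable]: "N t \<in> borel_measurable M"
  using adapted by (rule borel_measurable_F_imp_M)

lemma martingale_compensator:
  "martingale_on M F (\<lambda>t \<omega>. N t \<omega> - compensator t \<omega>)"
  using martingale unfolding compensator_def .

lemma compensator_incr_bounds:
  assumes "\<omega> \<in> space M" "0 \<le> s" "s \<le> t"
  shows "(t - s) * lam (s - N t \<omega>) \<le> compensator_incr s t \<omega>"
    and "compensator_incr s t \<omega> \<le> (t - s) * lam (t - N s \<omega>)"
    and "0 \<le> compensator_incr s t \<omega>"
    and "compensator_incr s t \<omega> \<le> (t - s) * lam_plus"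
proof -
  have mono: "mono (\<lambda>t. N t \<omega>)" using N_mono[OF assms(1)] by (simp add: mono_def)
  note integrable = integrable_on_lam_left_lim[OF lam_mono lam_nonneg lam_le_lam_plus mono]
  note bounds = integral_lam_left_lim_bounds[OF lam_mono lam_nonneg lam_le_lam_plus mono assms(3)]
  have "compensator_incr s t \<omega> = integral {s..t} (\<lambda>u. lam (u - left_lim (\<lambda>v. N v \<omega>) u))"
    using Henstock_Kurzweil_Integration.integral_combine[OF assms(2,3) integrable[of 0 t]]
    unfolding compensator_incr_def compensator_def by simp
  then show lower: "(t - s) * lam (s - N t \<omega>) \<le> compensator_incr s t \<omega>"
    and upper: "compensator_incr s t \<omega> \<le> (t - s) * lam (t - N s \<omega>)"
    using bounds by simp_all
  show "0 \<le> compensator_incr s t \<omega>"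
    using lower mult_nonneg_nonneg[OF _ lam_nonneg, of "t - s" "s - N t \<omega>"] assms(3) by simp
  show "compensator_incr s t \<omega> \<le> (t - s) * lam_plus"
    using upper mult_left_mono[OF lam_le_lam_plus[of "t - N s \<omega>"], of "t - s"] assms(3) by simp
qed

lemma compensator_measurable [measurable]:
  assumes "0 \<le> t"
  shows "compensator t \<in> borel_measurable M"
proof -
  have "(\<lambda>\<omega>. N t \<omega> - compensator t \<omega>) \<in> borel_measurable M"
    using martingale_compensator assms borel_measurable_F_imp_M
    unfolding martingale_on_def by blast
  then have "(\<lambda>\<omega>. N t \<omega> - (N t \<omega> - compensator t \<omega>)) \<in> borel_measurable M" by measurable
  then show ?thesis by simp
qed

lemma compensator_incr_measurable [measurable]:
  "0 \<le> s \<Longrightarrow> s \<le> t \<Longrightarrow> compensator_incr s t \<in> borel_measurable M"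
  unfolding compensator_incr_def by measurable

lemma integrable_compensator:
  assumes "0 \<le> t"
  shows "integrable M (compensator t)"
proof (rule integrable_const_bound[where B="t * lam_plus"])
  have "compensator t \<omega> = compensator_incr 0 t \<omega>" for \<omega>
    by (simp add: compensator_incr_def compensator_def)
  then show "AE \<omega> in M. norm (compensator t \<omega>) \<le> t * lam_plus"
    using compensator_incr_bounds(3,4)[OF _ order.refl assms] by (intro AE_I2) simp
qed (use assms in simp)

lemma integrable_N:
  assumes "0 \<le> t"
  shows "integrable M (N t)"
proof -
  have "integrable M (\<lambda>\<omega>. (N t \<omega> - compensator t \<omega>) + compensator t \<omega>)"
    using martingale_compensator assms integrable_compensator[OF assms]
    unfolding martingale_on_def by (intro Bochner_Integration.integrable_add) auto
  then show ?thesis by simp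
qed

lemma integrable_compensator_incr:
  "0 \<le> s \<Longrightarrow> s \<le> t \<Longrightarrow> integrable M (compensator_incr s t)"
  unfolding compensator_incr_def using integrable_compensator by auto

lemma set_integral_increment:
  assumes st: "0 \<le> s" "s \<le> t" and A: "A \<in> sets (F s)"
  shows "(\<integral>\<omega>\<in>A. N t \<omega> - N s \<omega> \<partial>M) = (\<integral>\<omega>\<in>A. compensator_incr s t \<omega> \<partial>M)"
proof -
  have "A \<in> sets M" using A subalgebra_F unfolding subalgebra_def by blast
  then have set_integrable: "set_integrable M A f" if "integrable M f" for f :: "'a \<Rightarrow> real"
    unfolding set_integrable_def using that by (intro integrable_mult_indicator)
  have "(\<integral>\<omega>\<in>A. N t \<omega> - compensator t \<omega> \<partial>M) = (\<integral>\<omega>\<in>A. N s \<omega> - compensator s \<omega> \<partial>M)"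
    using martingale_compensator st A unfolding martingale_on_def by blast
  then have "(\<integral>\<omega>\<in>A. (N t \<omega> - compensator t \<omega>) - (N s \<omega> - compensator s \<omega>) \<partial>M) = 0"
    using st by (subst set_integral_diff(2)) (auto intro!: set_integrable integrable_N integrable_compensator)
  then have "(\<integral>\<omega>\<in>A. (N t \<omega> - N s \<omega>) - compensator_incr s t \<omega> \<partial>M) = 0"
    by (simp add: compensator_incr_def algebra_simps)
  then show ?thesis using st
    by (subst (asm) set_integral_diff(2))
      (auto intro!: set_integrable integrable_N integrable_compensator_incr)
qed

lemma nn_integral_mult_increment:
  assumes st: "0 \<le> s" "s \<le> t" and u: "u \<in> borel_measurable (F s)"
  shows "(\<integral>\<^sup>+\<omega>. u \<omega> * ennreal (N t \<omega> - N s \<omega>) \<partial>M)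
       = (\<integral>\<^sup>+\<omega>. u \<omega> * ennreal (compensator_incr s t \<omega>) \<partial>M)"
  using u
proof (induction rule: borel_measurable_induct)
  case (cong f g)
  then show ?case using subalgebra_F unfolding subalgebra_def by (metis (no_types, lifting) nn_integral_cong)
next
  case (set A)
  have "A \<in> sets M" using set subalgebra_F unfolding subalgebra_def by blast
  then have "(\<integral>\<^sup>+\<omega>. indicator A \<omega> * ennreal (f \<omega>) \<partial>M) = ennreal (\<integral>\<omega>\<in>A. f \<omega> \<partial>M)"
    if "integrable M f" "\<And>\<omega>. \<omega> \<in> space M \<Longrightarrow> 0 \<le> f \<omega>" for f
    using nn_set_integral_eq_set_integral[OF that(1)] that(2) by (simp add: mult.commute)
  then show ?case
    using set_integral_increment[OF st set] st N_mono compensator_incr_bounds(3)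
    by (simp add: integrable_N integrable_compensator_incr)
next
  case (mult u c)
  then have "u \<in> borel_measurable M" using borel_measurable_F_imp_M by blast
  then show ?case using mult st by (simp add: mult.assoc nn_integral_cmult)
next
  case (add u v)
  then have "u \<in> borel_measurable M" "v \<in> borel_measurable M" by (auto intro: borel_measurable_F_imp_M)
  then show ?case using add st by (simp add: distrib_right nn_integral_add)
next
  case (seq U)
  have [measurable]: "\<And>i. U i \<in> borel_measurable M" using seq borel_measurable_F_imp_M by blast
  have "incseq (\<lambda>i \<omega>. U i \<omega> * ennreal (f \<omega>))" for f
    using seq by (auto simp: incseq_def le_fun_def intro!: mult_right_mono)
  then have "(\<integral>\<^sup>+\<omega>. (SUP i. U i) \<omega> * ennreal (f \<omega>) \<partial>M) = (SUP i. \<integral>\<^sup>+\<omega>. U i \<omega> * ennreal (f \<omega>) \<partial>M)"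
    if [measurable]: "f \<in> borel_measurable M" for f
    by (simp add: SUP_mult_right_ennreal image_image nn_integral_monotone_convergence_SUP)
  then show ?case using seq.IH st by simp
qed

lemma integral_mult_increment_nonneg:
  assumes st: "0 \<le> s" "s \<le> t" and X: "X \<in> borel_measurable (F s)" "integrable M X"
    and X_nonneg: "\<And>\<omega>. \<omega> \<in> space M \<Longrightarrow> 0 \<le> X \<omega>"
  shows "integrable M (\<lambda>\<omega>. X \<omega> * (N t \<omega> - N s \<omega>))"
    and "integrable M (\<lambda>\<omega>. X \<omega> * compensator_incr s t \<omega>)"
    and "(\<integral>\<omega>. X \<omega> * (N t \<omega> - N s \<omega>) \<partial>M) = (\<integral>\<omega>. X \<omega> * compensator_incr s t \<omega> \<partial>M)"
proof -
  have [measurable]: "X \<in> borel_measurable M" using X(1) by (rule borel_measurable_F_imp_M)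
  have incr_nonneg: "0 \<le> N t \<omega> - N s \<omega>" "0 \<le> compensator_incr s t \<omega>" if "\<omega> \<in> space M" for \<omega>
    using N_mono[OF that st(2)] compensator_incr_bounds(3)[OF that st] by simp_all
  have nn_eq: "(\<integral>\<^sup>+\<omega>. ennreal (X \<omega> * (N t \<omega> - N s \<omega>)) \<partial>M)
             = (\<integral>\<^sup>+\<omega>. ennreal (X \<omega> * compensator_incr s t \<omega>) \<partial>M)"
  proof -
    have "(\<integral>\<^sup>+\<omega>. ennreal (X \<omega> * (N t \<omega> - N s \<omega>)) \<partial>M)
        = (\<integral>\<^sup>+\<omega>. ennreal (X \<omega>) * ennreal (N t \<omega> - N s \<omega>) \<partial>M)"
      using X_nonneg incr_nonneg by (intro nn_integral_cong) (simp add: ennreal_mult)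
    also have "\<dots> = (\<integral>\<^sup>+\<omega>. ennreal (X \<omega>) * ennreal (compensator_incr s t \<omega>) \<partial>M)"
      using nn_integral_mult_increment[OF st measurable_compose[OF X(1) measurable_ennreal]] .
    also have "\<dots> = (\<integral>\<^sup>+\<omega>. ennreal (X \<omega> * compensator_incr s t \<omega>) \<partial>M)"
      using X_nonneg incr_nonneg by (intro nn_integral_cong) (simp add: ennreal_mult)
    finally show ?thesis .
  qed
  show int_J: "integrable M (\<lambda>\<omega>. X \<omega> * compensator_incr s t \<omega>)"
  proof (rule Bochner_Integration.integrable_bound[OF integrable_mult_right[OF X(2), of "(t - s) * lam_plus"]])
    show "AE \<omega> in M. norm (X \<omega> * compensator_incr s t \<omega>) \<le> norm ((t - s) * lam_plus * X \<omega>)"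
      using compensator_incr_bounds(4)[OF _ st] X_nonneg incr_nonneg lam_plus_greater_1 st
      by (intro AE_I2) (simp add: abs_mult mult_left_mono mult.commute)
  qed (use st in measurable)
  have nn_J: "(\<integral>\<^sup>+\<omega>. ennreal (X \<omega> * compensator_incr s t \<omega>) \<partial>M) = ennreal (\<integral>\<omega>. X \<omega> * compensator_incr s t \<omega> \<partial>M)"
    using int_J X_nonneg incr_nonneg by (intro nn_integral_eq_integral AE_I2) auto
  show int_N: "integrable M (\<lambda>\<omega>. X \<omega> * (N t \<omega> - N s \<omega>))"
    using nn_eq nn_J X_nonneg incr_nonneg by (intro integrableI_nn_integral_finite AE_I2) auto
  have "ennreal (\<integral>\<omega>. X \<omega> * (N t \<omega> - N s \<omega>) \<partial>M) = ennreal (\<integral>\<omega>. X \<omega> * compensator_incr s t \<omega> \<partial>M)"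
    using nn_integral_eq_integral[OF int_N] nn_eq nn_J X_nonneg incr_nonneg by (simp add: AE_I2)
  then show "(\<integral>\<omega>. X \<omega> * (N t \<omega> - N s \<omega>) \<partial>M) = (\<integral>\<omega>. X \<omega> * compensator_incr s t \<omega> \<partial>M)"
    using X_nonneg incr_nonneg by (subst (asm) ennreal_inj) (auto intro!: integral_nonneg_AE AE_I2)
qed

lemma integral_mult_increment:
  assumes st: "0 \<le> s" "s \<le> t" and X: "X \<in> borel_measurable (F s)" "integrable M X"
  shows "integrable M (\<lambda>\<omega>. X \<omega> * (N t \<omega> - N s \<omega>))"
    and "integrable M (\<lambda>\<omega>. X \<omega> * compensator_incr s t \<omega>)"
    and "(\<integral>\<omega>. X \<omega> * (N t \<omega> - N s \<omega>) \<partial>M) = (\<integral>\<omega>. X \<omega> * compensator_incr s t \<omega> \<partial>M)"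
proof -
  define Xp where "Xp \<omega> = max (X \<omega>) 0" for \<omega>
  define Xn where "Xn \<omega> = max (- X \<omega>) 0" for \<omega>
  note [measurable] = X(1)
  have parts: "Xp \<in> borel_measurable (F s)" "Xn \<in> borel_measurable (F s)"
    "integrable M Xp" "integrable M Xn"
    unfolding Xp_def Xn_def using X(2) by (measurable, measurable, simp_all)
  have nonneg: "\<And>\<omega>. \<omega> \<in> space M \<Longrightarrow> 0 \<le> Xp \<omega>" "\<And>\<omega>. \<omega> \<in> space M \<Longrightarrow> 0 \<le> Xn \<omega>"
    by (simp_all add: Xp_def Xn_def)
  note pos = integral_mult_increment_nonneg[OF st parts(1) parts(3) nonneg(1)]
  note neg = integral_mult_increment_nonneg[OF st parts(2) parts(4) nonneg(2)]
  have split: "X \<omega> * d = Xp \<omega> * d - Xn \<omega> * d" for \<omega> d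
    by (simp add: Xp_def Xn_def max_def algebra_simps)
  show "integrable M (\<lambda>\<omega>. X \<omega> * (N t \<omega> - N s \<omega>))"
    "integrable M (\<lambda>\<omega>. X \<omega> * compensator_incr s t \<omega>)"
    using Bochner_Integration.integrable_diff[OF pos(1) neg(1)]
      Bochner_Integration.integrable_diff[OF pos(2) neg(2)]
    by (simp_all only: split)
  show "(\<integral>\<omega>. X \<omega> * (N t \<omega> - N s \<omega>) \<partial>M) = (\<integral>\<omega>. X \<omega> * compensator_incr s t \<omega> \<partial>M)"
    by (simp only: split Bochner_Integration.integral_diff[OF pos(1) neg(1)]
        Bochner_Integration.integral_diff[OF pos(2) neg(2)] pos(3) neg(3))
qed

lemma integral_increment_le:
  assumes "0 \<le> s" "s \<le> t"
  shows "(\<integral>\<omega>. N t \<omega> - N s \<omega> \<partial>M) \<le> (t - s) * lam_plus"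
proof -
  have "(\<integral>\<omega>. N t \<omega> - N s \<omega> \<partial>M) = (\<integral>\<omega>. compensator_incr s t \<omega> \<partial>M)"
    using integral_mult_increment(3)[OF assms borel_measurable_const integrable_const, of 1] by simp
  also have "\<dots> \<le> (\<integral>\<omega>. (t - s) * lam_plus \<partial>M)"
    by (rule integral_mono) (use integrable_compensator_incr[OF assms] compensator_incr_bounds(4)[OF _ assms] in auto)
  finally show ?thesis by (simp add: prob_space)
qed
lemma integral_mult_successive_increments_le:
  assumes "0 \<le> s" "s \<le> u" "u \<le> v"
  shows "integrable M (\<lambda>\<omega>. (N u \<omega> - N s \<omega>) * (N v \<omega> - N u \<omega>))"
    and "(\<integral>\<omega>. (N u \<omega> - N s \<omega>) * (N v \<omega> - N u \<omega>) \<partial>M) \<le> (u - s) * (v - u) * lam_plus\<^sup>2"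
proof -
  have u: "0 \<le> u" using assms by simp
  have X: "(\<lambda>\<omega>. N u \<omega> - N s \<omega>) \<in> borel_measurable (F u)"
    using adapted borel_measurable_F_mono[OF assms(2) adapted] by measurable
  have X_int: "integrable M (\<lambda>\<omega>. N u \<omega> - N s \<omega>)"
    using assms by (intro Bochner_Integration.integrable_diff integrable_N) auto
  note incr = integral_mult_increment[OF u assms(3) X X_int]
  show "integrable M (\<lambda>\<omega>. (N u \<omega> - N s \<omega>) * (N v \<omega> - N u \<omega>))" by (rule incr(1))
  have "(\<integral>\<omega>. (N u \<omega> - N s \<omega>) * (N v \<omega> - N u \<omega>) \<partial>M)
      = (\<integral>\<omega>. (N u \<omega> - N s \<omega>) * compensator_incr u v \<omega> \<partial>M)"
    by (rule incr(3))
  also have "\<dots> \<le> (\<integral>\<omega>. (N u \<omega> - N s \<omega>) * ((v - u) * lam_plus) \<partial>M)"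
  proof (rule integral_mono)
    fix \<omega> assume "\<omega> \<in> space M"
    then show "(N u \<omega> - N s \<omega>) * compensator_incr u v \<omega> \<le> (N u \<omega> - N s \<omega>) * ((v - u) * lam_plus)"
      using compensator_incr_bounds(4)[OF _ u assms(3)] N_mono[of \<omega> s u] assms
      by (intro mult_left_mono) auto
  qed (use incr(2) X_int in auto)
  also have "\<dots> = (\<integral>\<omega>. N u \<omega> - N s \<omega> \<partial>M) * ((v - u) * lam_plus)" by simp
  also have "\<dots> \<le> ((u - s) * lam_plus) * ((v - u) * lam_plus)"
    using integral_increment_le[OF assms(1,2)] lam_plus_greater_1 assms by (intro mult_right_mono) auto
  finally show "(\<integral>\<omega>. (N u \<omega> - N s \<omega>) * (N v \<omega> - N u \<omega>) \<partial>M) \<le> (u - s) * (v - u) * lam_plus\<^sup>2"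
    by (simp add: power2_eq_square mult_ac)
qed

lemma integral_partition_sum_le:
  assumes "0 \<le> s" "0 < m"
  defines "t \<equiv> \<lambda>c. s + real c / real m"
  shows "integrable M (\<lambda>\<omega>. \<Sum>c<m. (N (t c) \<omega> - N s \<omega>) * (N (t (Suc c)) \<omega> - N (t c) \<omega>))"
    and "(\<integral>\<omega>. (\<Sum>c<m. (N (t c) \<omega> - N s \<omega>) * (N (t (Suc c)) \<omega> - N (t c) \<omega>)) \<partial>M) \<le> lam_plus\<^sup>2"
proof -
  have t: "s \<le> t c" "t c \<le> t (Suc c)" "t (Suc c) - t c = 1 / real m" for c
    using assms by (auto simp: t_def divide_right_mono add_divide_distrib)
  note summand = integral_mult_successive_increments_le[OF assms(1) t(1,2)]
  then show "integrable M (\<lambda>\<omega>. \<Sum>c<m. (N (t c) \<omega> - N s \<omega>) * (N (t (Suc c)) \<omega> - N (t c) \<omega>))"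
    by (intro Bochner_Integration.integrable_sum) blast
  have "(\<integral>\<omega>. (\<Sum>c<m. (N (t c) \<omega> - N s \<omega>) * (N (t (Suc c)) \<omega> - N (t c) \<omega>)) \<partial>M)
      = (\<Sum>c<m. \<integral>\<omega>. (N (t c) \<omega> - N s \<omega>) * (N (t (Suc c)) \<omega> - N (t c) \<omega>) \<partial>M)"
    using summand(1) by (rule Bochner_Integration.integral_sum)
  also have "\<dots> \<le> (\<Sum>c<m. lam_plus\<^sup>2 / real m)"
  proof (rule sum_mono)
    fix c assume "c \<in> {..<m}"
    then have "t c - s \<le> 1" by (simp add: t_def)
    then have "(t c - s) * lam_plus\<^sup>2 \<le> lam_plus\<^sup>2" using t(1)[of c] by (intro mult_left_le_one_le) auto
    then have "(t c - s) * lam_plus\<^sup>2 / real m \<le> lam_plus\<^sup>2 / real m" by (rule divide_right_mono) simp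
    then show "(\<integral>\<omega>. (N (t c) \<omega> - N s \<omega>) * (N (t (Suc c)) \<omega> - N (t c) \<omega>) \<partial>M) \<le> lam_plus\<^sup>2 / real m"
      using summand(2)[of c] t(3)[of c] by simp
  qed
  finally show "(\<integral>\<omega>. (\<Sum>c<m. (N (t c) \<omega> - N s \<omega>) * (N (t (Suc c)) \<omega> - N (t c) \<omega>)) \<partial>M) \<le> lam_plus\<^sup>2"
    using assms(2) by simp
qed

lemma second_factorial_moment_le:
  assumes "0 \<le> s"
  shows "integrable M (\<lambda>\<omega>. (N (s + 1) \<omega> - N s \<omega>) * (N (s + 1) \<omega> - N s \<omega> - 1))"
    and "(\<integral>\<omega>. (N (s + 1) \<omega> - N s \<omega>) * (N (s + 1) \<omega> - N s \<omega> - 1) \<partial>M) \<le> 2 * lam_plus\<^sup>2"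
proof -
  define t where "t m c = s + real c / real m" for m c :: nat
  define U where "U m = (\<lambda>\<omega>. 2 * (\<Sum>c<m. (N (t m c) \<omega> - N s \<omega>) * (N (t m (Suc c)) \<omega> - N (t m c) \<omega>)))"
    for m
  have U_measurable: "U m \<in> borel_measurable M" for m unfolding U_def by measurable
  have U_nonneg: "0 \<le> U m \<omega>" if "\<omega> \<in> space M" for m \<omega>
    unfolding U_def t_def using that assms
    by (auto intro!: mult_nonneg_nonneg sum_nonneg N_mono divide_right_mono)
  have U_lim: "(\<lambda>m. U m \<omega>) \<longlonglongrightarrow> (N (s + 1) \<omega> - N s \<omega>) * (N (s + 1) \<omega> - N s \<omega> - 1)"
    if "\<omega> \<in> space M" for \<omega>
    using simple_counting_path_second_factorial_eq_sum[OF paths[OF that], of s]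
    by (intro tendsto_eventually) (auto simp: U_def t_def elim!: eventually_mono)
  have U_bound: "eventually (\<lambda>m. integrable M (U m) \<and> integral\<^sup>L M (U m) \<le> 2 * lam_plus\<^sup>2) sequentially"
    using eventually_gt_at_top[of 0]
  proof eventually_elim
    case (elim m)
    then show ?case using integral_partition_sum_le[OF assms elim] by (simp add: U_def t_def)
  qed
  show "integrable M (\<lambda>\<omega>. (N (s + 1) \<omega> - N s \<omega>) * (N (s + 1) \<omega> - N s \<omega> - 1))"
    and "(\<integral>\<omega>. (N (s + 1) \<omega> - N s \<omega>) * (N (s + 1) \<omega> - N s \<omega> - 1) \<partial>M) \<le> 2 * lam_plus\<^sup>2"
    using Fatou_integrable_le[OF U_measurable _ U_nonneg U_lim U_bound] by simp_all
qed

context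
  fixes z0 z1 :: real
  assumes z1: "\<forall>w\<ge>z1. 1 \<le> lam w" and z0: "z0 \<le> 0" "\<forall>w\<le>z0. lam w \<le> 1"
begin

lemma deviation_drift_le:
  assumes \<omega>: "\<omega> \<in> space M" and s: "0 \<le> s"
  shows "(s - N s \<omega>) * (1 - compensator_incr s (s + 1) \<omega>)
    \<le> \<bar>z1\<bar> + (1 - z0) * lam_plus + (N (s + 1) \<omega> - N s \<omega>)"
proof (rule drift_le[OF _ _ _ _ _ z1 z0])
  note J = compensator_incr_bounds[OF \<omega> s, of "s + 1"]
  show "0 \<le> N (s + 1) \<omega> - N s \<omega>" using N_mono[OF \<omega>, of s "s + 1"] by simp
  show "lam (s - N s \<omega> - (N (s + 1) \<omega> - N s \<omega>)) \<le> compensator_incr s (s + 1) \<omega>"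
    "compensator_incr s (s + 1) \<omega> \<le> lam (s - N s \<omega> + 1)"
    using J(1,2) by (simp_all add: algebra_simps)
  show "0 \<le> compensator_incr s (s + 1) \<omega>" "compensator_incr s (s + 1) \<omega> \<le> lam_plus"
    using J(3,4) by simp_all
qed

text \<open>With \<open>z = s - N\<^sub>s\<close> and \<open>k = N\<^sub>s\<^sub>+\<^sub>1 - N\<^sub>s\<close> one has
  \<open>(z + 1 - k)\<^sup>2 = z\<^sup>2 + 2 z (1 - k) + 1 - k + k (k - 1)\<close>, and testing the martingale against \<open>z\<close>
  replaces \<open>k\<close> by the compensator in the cross term.\<close>

lemma square_deviation_step:
  assumes s: "0 \<le> s" and int_sq: "integrable M (\<lambda>\<omega>. (s - N s \<omega>)\<^sup>2)"
  shows "integrable M (\<lambda>\<omega>. (s + 1 - N (s + 1) \<omega>)\<^sup>2)"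
    and "(\<integral>\<omega>. (s + 1 - N (s + 1) \<omega>)\<^sup>2 \<partial>M)
      \<le> (\<integral>\<omega>. (s - N s \<omega>)\<^sup>2 \<partial>M) + (2 * (\<bar>z1\<bar> + (1 - z0) * lam_plus) + 1 + lam_plus + 2 * lam_plus\<^sup>2)"
proof -
  define z where "z = (\<lambda>\<omega>. s - N s \<omega>)"
  define k where "k = (\<lambda>\<omega>. N (s + 1) \<omega> - N s \<omega>)"
  define kk where "kk = (\<lambda>\<omega>. k \<omega> * (k \<omega> - 1))"
  define j where "j = compensator_incr s (s + 1)"
  define B0 where "B0 = \<bar>z1\<bar> + (1 - z0) * lam_plus"
  have z_int: "integrable M z" unfolding z_def using integrable_N[OF s] by simp
  have z_sq_int: "integrable M (\<lambda>\<omega>. (z \<omega>)\<^sup>2)" using int_sq by (simp add: z_def)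
  have "z \<in> borel_measurable (F s)" unfolding z_def using adapted by measurable
  note zk = integral_mult_increment[OF s _ this z_int, of "s + 1"]
  have zk_int: "integrable M (\<lambda>\<omega>. z \<omega> * k \<omega>)" "integrable M (\<lambda>\<omega>. z \<omega> * j \<omega>)"
    and zk_eq: "(\<integral>\<omega>. z \<omega> * k \<omega> \<partial>M) = (\<integral>\<omega>. z \<omega> * j \<omega> \<partial>M)"
    using zk by (simp_all add: k_def j_def)
  have kk_int: "integrable M kk" and kk_le: "(\<integral>\<omega>. kk \<omega> \<partial>M) \<le> 2 * lam_plus\<^sup>2"
    using second_factorial_moment_le[OF s] by (simp_all add: kk_def k_def)
  have k_int: "integrable M k" unfolding k_def using integrable_N s by auto
  have k_le: "(\<integral>\<omega>. k \<omega> \<partial>M) \<le> lam_plus"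
    using integral_increment_le[OF s, of "s + 1"] by (simp add: k_def)
  let ?main = "\<lambda>\<omega>. (z \<omega>)\<^sup>2 + 2 * (z \<omega> - z \<omega> * j \<omega>) + 1 - k \<omega> + kk \<omega>"
  have eq: "(\<lambda>\<omega>. (s + 1 - N (s + 1) \<omega>)\<^sup>2) = (\<lambda>\<omega>. ?main \<omega> + 2 * (z \<omega> * j \<omega> - z \<omega> * k \<omega>))"
    by (simp add: fun_eq_iff z_def k_def kk_def power2_eq_square algebra_simps)
  have main_int: "integrable M ?main"
    using z_sq_int z_int zk_int k_int kk_int
    by (intro Bochner_Integration.integrable_add Bochner_Integration.integrable_diff
        integrable_mult_right integrable_const)
  have cross_int: "integrable M (\<lambda>\<omega>. 2 * (z \<omega> * j \<omega> - z \<omega> * k \<omega>))"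
    using zk_int by (intro Bochner_Integration.integrable_diff integrable_mult_right)
  show "integrable M (\<lambda>\<omega>. (s + 1 - N (s + 1) \<omega>)\<^sup>2)"
    unfolding eq using main_int cross_int by (rule Bochner_Integration.integrable_add)
  have "(\<integral>\<omega>. 2 * (z \<omega> * j \<omega> - z \<omega> * k \<omega>) \<partial>M) = 0"
    using zk_int zk_eq by (simp add: Bochner_Integration.integral_diff)
  then have "(\<integral>\<omega>. (s + 1 - N (s + 1) \<omega>)\<^sup>2 \<partial>M) = (\<integral>\<omega>. ?main \<omega> \<partial>M)"
    unfolding eq Bochner_Integration.integral_add[OF main_int cross_int] by simp
  also have "\<dots> \<le> (\<integral>\<omega>. (z \<omega>)\<^sup>2 + (2 * B0 + 1) + k \<omega> + kk \<omega> \<partial>M)"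
  proof (rule integral_mono[OF main_int])
    fix \<omega> assume "\<omega> \<in> space M"
    then have "z \<omega> * (1 - j \<omega>) \<le> B0 + k \<omega>"
      using deviation_drift_le[OF _ s] by (simp add: z_def k_def j_def B0_def)
    then show "?main \<omega> \<le> (z \<omega>)\<^sup>2 + (2 * B0 + 1) + k \<omega> + kk \<omega>" by (simp add: algebra_simps)
  qed (use z_sq_int k_int kk_int in simp)
  also have "\<dots> = (\<integral>\<omega>. (z \<omega>)\<^sup>2 \<partial>M) + (2 * B0 + 1) + (\<integral>\<omega>. k \<omega> \<partial>M) + (\<integral>\<omega>. kk \<omega> \<partial>M)"
    using z_sq_int k_int kk_int by (simp add: prob_space)
  finally show "(\<integral>\<omega>. (s + 1 - N (s + 1) \<omega>)\<^sup>2 \<partial>M)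
      \<le> (\<integral>\<omega>. (s - N s \<omega>)\<^sup>2 \<partial>M) + (2 * (\<bar>z1\<bar> + (1 - z0) * lam_plus) + 1 + lam_plus + 2 * lam_plus\<^sup>2)"
    using k_le kk_le by (simp add: z_def B0_def)
qed

lemma square_deviation_le:
  "integrable M (\<lambda>\<omega>. (real n - N (real n) \<omega>)\<^sup>2) \<and>
   (\<integral>\<omega>. (real n - N (real n) \<omega>)\<^sup>2 \<partial>M)
     \<le> (2 * (\<bar>z1\<bar> + (1 - z0) * lam_plus) + 1 + lam_plus + 2 * lam_plus\<^sup>2) * real n"
proof (induction n)
  case 0
  have "integrable M (\<lambda>\<omega>. (real 0 - N (real 0) \<omega>)\<^sup>2) = integrable M (\<lambda>_. 0 :: real)"
    by (intro Bochner_Integration.integrable_cong) (auto simp: N_eq_0)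
  moreover have "(\<integral>\<omega>. (real 0 - N (real 0) \<omega>)\<^sup>2 \<partial>M) = (\<integral>\<omega>. 0 \<partial>M)"
    by (intro Bochner_Integration.integral_cong) (auto simp: N_eq_0)
  ultimately show ?case by simp
next
  case (Suc n)
  then show ?case using square_deviation_step[of "real n"] by (simp add: algebra_simps)
qed

end

lemma mean_deviation_le:
  "\<exists>C\<ge>0. \<forall>n::nat. \<bar>real n - (\<integral>\<omega>. N (real n) \<omega> \<partial>M)\<bar> \<le> sqrt (C * real n)"
proof -
  obtain z1 where z1: "\<forall>w\<ge>z1. 1 \<le> lam w"
    using order_tendstoD(1)[OF lam_at_top lam_plus_greater_1]
    unfolding eventually_at_top_linorder by (auto intro: less_imp_le)
  obtain z0 where z0: "z0 \<le> 0" "\<forall>w\<le>z0. lam w \<le> 1"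
  proof -
    obtain b where "\<forall>w\<le>b. lam w < 1"
      using order_tendstoD(2)[OF lam_at_bot lam_minus_less_1] unfolding eventually_at_bot_linorder by blast
    then show ?thesis by (intro that[of "min b 0"]) auto
  qed
  define C where "C = 2 * (\<bar>z1\<bar> + (1 - z0) * lam_plus) + 1 + lam_plus + 2 * lam_plus\<^sup>2"
  note moments = square_deviation_le[OF z1 z0, folded C_def]
  have "(real n - (\<integral>\<omega>. N (real n) \<omega> \<partial>M))\<^sup>2 \<le> C * real n" for n
  proof -
    define Y where "Y = (\<lambda>\<omega>. real n - N (real n) \<omega>)"
    have Y_int: "integrable M Y" unfolding Y_def using integrable_N[of "real n"] by simp
    have "(\<integral>\<omega>. Y \<omega> \<partial>M) = real n - (\<integral>\<omega>. N (real n) \<omega> \<partial>M)"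
      unfolding Y_def using integrable_N[of "real n"] by (simp add: prob_space)
    moreover have "(\<integral>\<omega>. Y \<omega> \<partial>M)\<^sup>2 \<le> (\<integral>\<omega>. (Y \<omega>)\<^sup>2 \<partial>M)"
      using variance_eq[OF Y_int] variance_positive[of Y] moments[of n] by (simp add: Y_def)
    ultimately show ?thesis using moments[of n] by (simp add: Y_def)
  qed
  then have "\<bar>real n - (\<integral>\<omega>. N (real n) \<omega> \<partial>M)\<bar> \<le> sqrt (C * real n)" for n
    using real_sqrt_le_mono by fastforce
  moreover have "0 \<le> C" using z0 lam_plus_greater_1 by (simp add: C_def)
  ultimately show ?thesis by blast
qed

lemma integral_N_mono:
  assumes "0 \<le> s" "s \<le> t"
  shows "(\<integral>\<omega>. N s \<omega> \<partial>M) \<le> (\<integral>\<omega>. N t \<omega> \<partial>M)"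
  using assms by (intro integral_mono integrable_N N_mono) auto

theorem expected_count_ratio_tendsto_1: "((\<lambda>t. (\<integral>\<omega>. N t \<omega> \<partial>M) / t) \<longlongrightarrow> 1) at_top"
proof -
  obtain C where C: "0 \<le> C" "\<forall>n::nat. \<bar>real n - (\<integral>\<omega>. N (real n) \<omega> \<partial>M)\<bar> \<le> sqrt (C * real n)"
    using mean_deviation_le by blast
  show ?thesis by (rule ratio_tendsto_1_of_sqrt_deviation[OF integral_N_mono C(2)[rule_format] C(1)])
qed

end

theorem lemma6:
  fixes M :: "'a measure" and F :: "real \<Rightarrow> 'a measure"
    and N :: "real \<Rightarrow> 'a \<Rightarrow> real" and lam :: "real \<Rightarrow> real"
    and lam_minus lam_plus :: real
  assumes "prob_space M"
    and "filtration_of M F"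
    and "\<forall>\<omega>\<in>space M. simple_counting_path (\<lambda>t. N t \<omega>)"
    and "\<forall>t. N t \<in> borel_measurable (F t)"
    and "continuous_on UNIV lam" and "mono lam"
    and "(lam \<longlongrightarrow> lam_minus) at_bot" and "(lam \<longlongrightarrow> lam_plus) at_top"
    and "0 < lam_minus" and "lam_minus < 1" and "1 < lam_plus"
    and "martingale_on M F
           (\<lambda>t \<omega>. N t \<omega> - integral {0..t} (\<lambda>s. lam (s - left_lim (\<lambda>u. N u \<omega>) s)))"
  shows "((\<lambda>t. (\<integral>\<omega>. N t \<omega> \<partial>M) / t) \<longlongrightarrow> 1) at_top"
proof -
  interpret self_correcting_process M F N lam lam_minus lam_plus
    using assms by (intro self_correcting_process.intro self_correcting_process_axioms.intro) simp_all
  show ?thesis by (rule expected_count_ratio_tendsto_1)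
qed

end
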